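(* Let $d\in\mathbb N$ and let $S$ be a semigroup with a completely simple ideal $K$. (1) If $S$ is $d$-solvable, then $S^{2^d}=K$ and all subgroups of $K$ are $d$-solvable. (2) If $S$ is left $d$-nilpotent or right $d$-nilpotent or $d$-supernilpotent, then $S^{d+1}=K$ and all subgroups of $K$ are $d$-nilpotent.
   Context: $S^m=\{a_1\cdots a_m: a_i\in S\}$. For an algebra $\mathbf A$ and congruences $\alpha_1,\dots,\alpha_n$, $M_{\mathbf A}(\alpha_1,\dots,\alpha_n)$ is the subalgebra of $\mathbf A^{\{0,1\}^n}$ generated by all $g$ such that for some $i$ and $(a,b)\in\alpha_i$, $g(x)=a$ if $x_i=0$ and $g(x)=b$ if $x_i=1$; $[\alpha_1,\dots,\alpha_n]$ is the smallest congruence $\delta$ such that for all $f\in M_{\mathbf A}(\alpha_1,\dots,\alpha_n)$: if $(f(x0),f(x1))\in\delta$ for all $x\in\{0,1\}^{n-1}\setminus\{(1,\dots,1)\}$ then $(f(1,\dots,1,0),f(1,\dots,1,1))\in\delta$. With $1$ total, $0$ trivial congruence: $[1]^0=1$, $[1]^{k+1}=[[1]^k,[1]^k]$; $(1]^1=1$, $(1]^{k+1}=[1,(1]^k]$; $[1)^1=1$, $[1)^{k+1}=[[1)^k,1]$. $d$-solvable: $[1]^d=0$; left $d$-nilpotent: $(1]^{d+1}=0$; right $d$-nilpotent: $[1)^{d+1}=0$; $d$-supernilpotent: the $(d+1)$-ary $[1,\dots,1]=0$. For groups, $d$-solvable and $d$-nilpotent are in the classical sense (derived length, resp. nilpotency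 class at most $d$). *)

theory Defs
  imports "HOL-Algebra.Solvable_Groups"
begin

definition is_semigroup :: "'a set \<Rightarrow> ('a \<Rightarrow> 'a \<Rightarrow> 'a) \<Rightarrow> bool" where
  "is_semigroup S m \<longleftrightarrow> (\<forall>a\<in>S. \<forall>b\<in>S. m a b \<in> S) \<and>
     (\<forall>a\<in>S. \<forall>b\<in>S. \<forall>c\<in>S. m (m a b) c = m a (m b c))"

fun lprod :: "('a \<Rightarrow> 'a \<Rightarrow> 'a) \<Rightarrow> 'a list \<Rightarrow> 'a" where
  "lprod m [x] = x"
| "lprod m (x # y # xs) = m x (lprod m (y # xs))"
| "lprod m [] = undefined"

definition spow :: "'a set \<Rightarrow> ('a \<Rightarrow> 'a \<Rightarrow> 'a) \<Rightarrow> nat \<Rightarrow> 'a set" where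
  "spow S m k = {lprod m xs | xs. length xs = k \<and> set xs \<subseteq> S}"

definition is_ideal :: "'a set \<Rightarrow> ('a \<Rightarrow> 'a \<Rightarrow> 'a) \<Rightarrow> 'a set \<Rightarrow> bool" where
  "is_ideal S m I \<longleftrightarrow> I \<noteq> {} \<and> I \<subseteq> S \<and> (\<forall>s\<in>S. \<forall>a\<in>I. m s a \<in> I \<and> m a s \<in> I)"

definition simple_sg :: "'a set \<Rightarrow> ('a \<Rightarrow> 'a \<Rightarrow> 'a) \<Rightarrow> bool" where
  "simple_sg K m \<longleftrightarrow> (\<forall>I. is_ideal K m I \<longrightarrow> I = K)"

definition primitive_idempotent :: "'a set \<Rightarrow> ('a \<Rightarrow> 'a \<Rightarrow> 'a) \<Rightarrow> 'a \<Rightarrow> bool" where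
  "primitive_idempotent K m e \<longleftrightarrow> e \<in> K \<and> m e e = e \<and>
     (\<forall>f\<in>K. m f f = f \<and> m e f = f \<and> m f e = f \<longrightarrow> f = e)"

definition completely_simple :: "'a set \<Rightarrow> ('a \<Rightarrow> 'a \<Rightarrow> 'a) \<Rightarrow> bool" where
  "completely_simple K m \<longleftrightarrow> is_semigroup K m \<and> K \<noteq> {} \<and> simple_sg K m \<and>
     (\<exists>e. primitive_idempotent K m e)"

definition sg_subgroup :: "'a set \<Rightarrow> ('a \<Rightarrow> 'a \<Rightarrow> 'a) \<Rightarrow> 'a monoid \<Rightarrow> bool" where
  "sg_subgroup K m G \<longleftrightarrow> carrier G \<subseteq> K \<and> mult G = m \<and> group G"

definition is_congruence :: "'a set \<Rightarrow> ('a \<Rightarrow> 'a \<Rightarrow> 'a) \<Rightarrow> 'a rel \<Rightarrow> bool" where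
  "is_congruence S m \<theta> \<longleftrightarrow> equiv S \<theta> \<and>
     (\<forall>a b c d. (a, b) \<in> \<theta> \<longrightarrow> (c, d) \<in> \<theta> \<longrightarrow> (m a c, m b d) \<in> \<theta>)"

abbreviation total_cong :: "'a set \<Rightarrow> 'a rel" where "total_cong S \<equiv> S \<times> S"
abbreviation trivial_cong :: "'a set \<Rightarrow> 'a rel" where "trivial_cong S \<equiv> Id_on S"

text \<open>M_A(alpha_1,...,alpha_n), with alpha given as a list of length n, coordinates indexed
  0..n-1. Elements of A^{{0,1}^n} are represented as functions on bool lists; only the values on
  lists of length n matter.\<close>
inductive_set M_alg :: "'a set \<Rightarrow> ('a \<Rightarrow> 'a \<Rightarrow> 'a) \<Rightarrow> 'a rel list \<Rightarrow> (bool list \<Rightarrow> 'a) set"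
  for S m \<alpha>s where
    gen: "i < length \<alpha>s \<Longrightarrow> (a, b) \<in> \<alpha>s ! i \<Longrightarrow>
            (\<lambda>x. if x ! i then b else a) \<in> M_alg S m \<alpha>s"
  | prod: "f \<in> M_alg S m \<alpha>s \<Longrightarrow> g \<in> M_alg S m \<alpha>s \<Longrightarrow> (\<lambda>x. m (f x) (g x)) \<in> M_alg S m \<alpha>s"

definition term_cond :: "'a set \<Rightarrow> ('a \<Rightarrow> 'a \<Rightarrow> 'a) \<Rightarrow> 'a rel list \<Rightarrow> 'a rel \<Rightarrow> bool" where
  "term_cond S m \<alpha>s \<delta> \<longleftrightarrow> (\<forall>f\<in>M_alg S m \<alpha>s.
     (\<forall>x. length x = length \<alpha>s - 1 \<and> x \<noteq> replicate (length \<alpha>s - 1) True \<longrightarrow>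
          (f (x @ [False]), f (x @ [True])) \<in> \<delta>) \<longrightarrow>
     (f (replicate (length \<alpha>s - 1) True @ [False]), f (replicate (length \<alpha>s - 1) True @ [True])) \<in> \<delta>)"

definition hcomm :: "'a set \<Rightarrow> ('a \<Rightarrow> 'a \<Rightarrow> 'a) \<Rightarrow> 'a rel list \<Rightarrow> 'a rel" where
  "hcomm S m \<alpha>s = \<Inter>{\<delta>. is_congruence S m \<delta> \<and> term_cond S m \<alpha>s \<delta>}"

primrec derived_c :: "'a set \<Rightarrow> ('a \<Rightarrow> 'a \<Rightarrow> 'a) \<Rightarrow> nat \<Rightarrow> 'a rel" where
  "derived_c S m 0 = total_cong S"
| "derived_c S m (Suc k) = hcomm S m [derived_c S m k, derived_c S m k]"

text \<open>lcs k = (1]^(k+1), rcs k = [1)^(k+1)\<close>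
primrec lcs :: "'a set \<Rightarrow> ('a \<Rightarrow> 'a \<Rightarrow> 'a) \<Rightarrow> nat \<Rightarrow> 'a rel" where
  "lcs S m 0 = total_cong S"
| "lcs S m (Suc k) = hcomm S m [total_cong S, lcs S m k]"

primrec rcs :: "'a set \<Rightarrow> ('a \<Rightarrow> 'a \<Rightarrow> 'a) \<Rightarrow> nat \<Rightarrow> 'a rel" where
  "rcs S m 0 = total_cong S"
| "rcs S m (Suc k) = hcomm S m [rcs S m k, total_cong S]"

definition d_solvable :: "'a set \<Rightarrow> ('a \<Rightarrow> 'a \<Rightarrow> 'a) \<Rightarrow> nat \<Rightarrow> bool" where
  "d_solvable S m d \<longleftrightarrow> derived_c S m d = trivial_cong S"

definition left_nilpotent :: "'a set \<Rightarrow> ('a \<Rightarrow> 'a \<Rightarrow> 'a) \<Rightarrow> nat \<Rightarrow> bool" where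
  "left_nilpotent S m d \<longleftrightarrow> lcs S m d = trivial_cong S"

definition right_nilpotent :: "'a set \<Rightarrow> ('a \<Rightarrow> 'a \<Rightarrow> 'a) \<Rightarrow> nat \<Rightarrow> bool" where
  "right_nilpotent S m d \<longleftrightarrow> rcs S m d = trivial_cong S"

definition supernilpotent :: "'a set \<Rightarrow> ('a \<Rightarrow> 'a \<Rightarrow> 'a) \<Rightarrow> nat \<Rightarrow> bool" where
  "supernilpotent S m d \<longleftrightarrow> hcomm S m (replicate (Suc d) (total_cong S)) = trivial_cong S"

definition group_d_solvable :: "('a, 'b) monoid_scheme \<Rightarrow> nat \<Rightarrow> bool" where
  "group_d_solvable G d \<longleftrightarrow> (derived G ^^ d) (carrier G) = {\<one>\<^bsub>G\<^esub>}"

text \<open>Lower central series: gamma G k = gamma_(k+1)(G).\<close>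
primrec gamma :: "('a, 'b) monoid_scheme \<Rightarrow> nat \<Rightarrow> 'a set" where
  "gamma G 0 = carrier G"
| "gamma G (Suc k) = generate G {x \<otimes>\<^bsub>G\<^esub> y \<otimes>\<^bsub>G\<^esub> inv\<^bsub>G\<^esub> x \<otimes>\<^bsub>G\<^esub> inv\<^bsub>G\<^esub> y
                                  | x y. x \<in> gamma G k \<and> y \<in> carrier G}"

definition group_d_nilpotent :: "('a, 'b) monoid_scheme \<Rightarrow> nat \<Rightarrow> bool" where
  "group_d_nilpotent G d \<longleftrightarrow> gamma G d = {\<one>\<^bsub>G\<^esub>}"

end

theory Submission
  imports Defs
begin

text \<open>
  Besides \<open>K\<close> being an ideal, the one fact about \<open>K\<close> that is used is: for \<open>a, b \<in> K\<close> there
  is \<open>f \<in> K\<close> with \<open>a f = a\<close> and \<open>f b = b\<close>. Fed into the term condition it shows that if \<open>u\<close> and \<open>v\<close>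
  are congruent modulo \<open>\<theta>\<^sub>0\<close> resp. \<open>\<theta>\<^sub>1\<close> to elements of \<open>K\<close>, then \<open>u v\<close> is congruent modulo
  \<open>[\<theta>\<^sub>0, \<theta>\<^sub>1]\<close> to an element of \<open>K\<close>. By induction every element of \<open>S\<^bsup>2\<^sup>k\<^esup>\<close> is \<open>[1]\<^sup>k\<close>-congruent,
  and every element of \<open>S\<^bsup>k+1\<^esup>\<close> is \<open>(1]\<^bsup>k+1\<^esup>\<close>- and \<open>[1)\<^bsup>k+1\<^esup>\<close>-congruent, to an element of \<open>K\<close>; a
  cube built from the prefix products \<open>a s\<^sub>0 \<cdots> s\<^sub>i\<close> (\<open>a \<in> K\<close>) does the same for the \<open>(d+1)\<close>-ary
  commutator \<open>[1, \<dots>, 1]\<close> and \<open>S\<^bsup>d+1\<^esup>\<close>. When the relevant commutator is trivial, the power equals \<open>K\<close>.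
  For a subgroup \<open>G\<close> of \<open>K\<close>, each step of the derived or lower central series of \<open>G\<close> lands in
  the class of \<open>1\<close> of the corresponding commutator congruence of \<open>S\<close>, so these series reach \<open>{1}\<close>.
\<close>

locale magma_on =
  fixes S :: "'a set" and m :: "'a \<Rightarrow> 'a \<Rightarrow> 'a"
  assumes closed [simp, intro]: "a \<in> S \<Longrightarrow> b \<in> S \<Longrightarrow> m a b \<in> S"

locale semigroup_on = magma_on +
  assumes assoc [simp]: "a \<in> S \<Longrightarrow> b \<in> S \<Longrightarrow> c \<in> S \<Longrightarrow> m (m a b) c = m a (m b c)"

lemma is_semigroup_iff_semigroup_on: "is_semigroup S m \<longleftrightarrow> semigroup_on S m"
  unfolding is_semigroup_def semigroup_on_def semigroup_on_axioms_def magma_on_def by blast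

section \<open>Completely simple semigroups\<close>

context semigroup_on
begin

lemma simple_factor_through:
  assumes "simple_sg S m" "t \<in> S" "a \<in> S"
  obtains u v where "u \<in> S" "v \<in> S" "a = m u (m t v)"
proof -
  let ?I = "{m u (m t v) | u v. u \<in> S \<and> v \<in> S}"
  have "is_ideal S m ?I"
    unfolding is_ideal_def
  proof (intro conjI ballI)
    show "?I \<noteq> {}" "?I \<subseteq> S" using assms by auto
  next
    fix s x assume "s \<in> S" "x \<in> ?I"
    then obtain u v where "u \<in> S" "v \<in> S" "x = m u (m t v)" by blast
    with \<open>s \<in> S\<close> \<open>t \<in> S\<close> have "m s x = m (m s u) (m t v)" "m x s = m u (m t (m v s))"
      by simp_all
    with \<open>s \<in> S\<close> \<open>u \<in> S\<close> \<open>v \<in> S\<close> show "m s x \<in> ?I" "m x s \<in> ?I" by blast+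
  qed
  with assms(1) have "?I = S" unfolding simple_sg_def by blast
  with assms(3) that show thesis by blast
qed

text \<open>Write \<open>e = p t q\<close> and put \<open>l = e p e\<close>, \<open>r = e q e\<close>, so that \<open>l t r = e\<close>. Then \<open>t (r l)\<close> and
  \<open>(r l) t\<close> are idempotents of \<open>e S e\<close>, hence equal to \<open>e\<close> by primitivity.\<close>

lemma primitive_idempotent_local_inverse:
  assumes simple: "simple_sg S m" and prim: "primitive_idempotent S m e"
    and t: "t \<in> S" "m e t = t" "m t e = t"
  obtains z where "z \<in> S" "m t z = e" "m z t = e"
proof -
  have e: "e \<in> S" "m e e = e" and minimal: "\<And>f. f \<in> S \<Longrightarrow> m f f = f \<Longrightarrow> m e f = f \<Longrightarrow> m f e = f \<Longrightarrow> f = e"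
    using prim unfolding primitive_idempotent_def by blast+
  obtain p q where pq: "p \<in> S" "q \<in> S" "e = m p (m t q)"
    using simple_factor_through[OF simple t(1) e(1)] .
  define l r where "l = m e (m p e)" and "r = m e (m q e)"
  have lr: "l \<in> S" "r \<in> S" using pq e unfolding l_def r_def by auto
  have e_absorb: "m e (m e x) = m e x" "m e (m t x) = m t x" "m t (m e x) = m t x" if "x \<in> S" for x
    using that e t by (simp_all flip: assoc)
  have "m l (m t r) = m e (m (m p (m t q)) e)"
    using pq(1,2) e t unfolding l_def r_def by (simp add: e_absorb)
  then have ltr: "m l (m t r) = e" using pq(3) e by simp
  have re: "m r e = r" and le: "m l e = l" and er: "m e r = r"
    using e pq(1,2) unfolding l_def r_def by (simp_all add: e_absorb)
  show thesis
  proof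
    show rl: "m r l \<in> S" using lr by simp
    show "m t (m r l) = e"
    proof (rule minimal)
      have "m (m t (m r l)) (m t (m r l)) = m t (m r (m (m l (m t r)) l))" using t lr by simp
      also have "\<dots> = m t (m r l)" using ltr re lr e by (simp flip: assoc)
      finally show "m (m t (m r l)) (m t (m r l)) = m t (m r l)" .
      show "m e (m t (m r l)) = m t (m r l)" using t lr e by (simp flip: assoc)
      show "m (m t (m r l)) e = m t (m r l)" using t lr le e by simp
    qed (use t rl in simp)
    show "m (m r l) t = e"
    proof (rule minimal)
      have "m (m (m r l) t) (m (m r l) t) = m r (m (m l (m t r)) (m l t))" using t lr by simp
      also have "\<dots> = m (m r l) t" using ltr re lr e t by (simp flip: assoc)
      finally show "m (m (m r l) t) (m (m r l) t) = m (m r l) t" .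
      show "m e (m (m r l) t) = m (m r l) t" using t lr er e by (simp flip: assoc)
      show "m (m (m r l) t) e = m (m r l) t" using t lr e by simp
    qed (use t rl in simp)
  qed
qed

end

text \<open>The element \<open>f\<close> is the idempotent of the \<open>\<H>\<close>-class \<open>L\<^sub>a \<inter> R\<^sub>b\<close>.\<close>

lemma completely_simple_bridge:
  assumes cs: "completely_simple K m" and ab: "a \<in> K" "b \<in> K"
  obtains f where "f \<in> K" "m a f = a" "m f b = b"
proof -
  interpret semigroup_on K m
    using cs unfolding completely_simple_def is_semigroup_iff_semigroup_on by blast
  have simple: "simple_sg K m" and "\<exists>e. primitive_idempotent K m e"
    using cs unfolding completely_simple_def by blast+
  then obtain e where prim: "primitive_idempotent K m e" by blast
  then have e: "e \<in> K" "m e e = e" unfolding primitive_idempotent_def by blast+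
  obtain u v where uv: "u \<in> K" "v \<in> K" "a = m u (m e v)"
    using simple_factor_through[OF simple e(1) ab(1)] .
  obtain u' v' where uv': "u' \<in> K" "v' \<in> K" "b = m u' (m e v')"
    using simple_factor_through[OF simple e(1) ab(2)] .
  define X Y where "X = m e v" and "Y = m u' e"
  have XY: "X \<in> K" "Y \<in> K" "m e X = X" "m Y e = Y"
    using e uv uv' unfolding X_def Y_def by (simp_all flip: assoc) (simp add: assoc)
  obtain z where z: "z \<in> K" "m (m X Y) z = e" "m z (m X Y) = e"
    using primitive_idempotent_local_inverse[OF simple prim, of "m X Y"] XY e
    by (metis assoc closed)
  show thesis
  proof
    show "m Y (m z X) \<in> K" using XY z by simp
    have a: "a = m u X" and b: "b = m Y v'" using uv uv' e unfolding X_def Y_def by simp_all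
    have "m a (m Y (m z X)) = m u (m (m (m X Y) z) X)" using a uv(1) XY(1,2) z(1) by simp
    also have "\<dots> = a" by (simp only: z(2) XY(3) a)
    finally show "m a (m Y (m z X)) = a" .
    have "m (m Y (m z X)) b = m Y (m (m z (m X Y)) v')" using b uv'(2) XY(1,2) z(1) by simp
    also have "\<dots> = m (m Y e) v'" using XY uv' e by (simp only: z(3)) (simp flip: assoc)
    also have "\<dots> = b" by (simp only: XY(4) b)
    finally show "m (m Y (m z X)) b = b" .
  qed
qed

section \<open>Finite products and powers\<close>

lemma lprod_Cons: "xs \<noteq> [] \<Longrightarrow> lprod m (x # xs) = m x (lprod m xs)"
  by (cases xs) auto

lemma lprod_replicate_left_unit: "m f b = b \<Longrightarrow> lprod m (replicate n f @ [b]) = b"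
  by (induction n) (simp_all add: lprod_Cons)

lemma spow_one [simp]: "spow S m (Suc 0) = S"
  unfolding spow_def by (auto simp: length_Suc_conv intro!: exI[of _ "[_]"])

primrec prod_upto :: "('a \<Rightarrow> 'a \<Rightarrow> 'a) \<Rightarrow> (nat \<Rightarrow> 'a) \<Rightarrow> nat \<Rightarrow> 'a" where
  "prod_upto m h 0 = h 0"
| "prod_upto m h (Suc n) = m (prod_upto m h n) (h (Suc n))"

lemma prod_upto_cong: "(\<And>i. i \<le> n \<Longrightarrow> h i = h' i) \<Longrightarrow> prod_upto m h n = prod_upto m h' n"
  by (induction n) auto

context magma_on
begin

lemma lprod_closed: "xs \<noteq> [] \<Longrightarrow> set xs \<subseteq> S \<Longrightarrow> lprod m xs \<in> S"
  by (induction xs rule: list_nonempty_induct) (auto simp: lprod_Cons)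

lemma prod_upto_closed: "(\<And>i. i \<le> n \<Longrightarrow> h i \<in> S) \<Longrightarrow> prod_upto m h n \<in> S"
  by (induction n) auto

end

context semigroup_on
begin

lemma lprod_append:
  "xs \<noteq> [] \<Longrightarrow> ys \<noteq> [] \<Longrightarrow> set xs \<subseteq> S \<Longrightarrow> set ys \<subseteq> S \<Longrightarrow>
    lprod m (xs @ ys) = m (lprod m xs) (lprod m ys)"
  by (induction xs rule: list_nonempty_induct) (auto simp: lprod_Cons lprod_closed)

lemma spow_add:
  assumes "x \<in> spow S m (p + q)" "0 < p" "0 < q"
  obtains u v where "u \<in> spow S m p" "v \<in> spow S m q" "x = m u v"
proof -
  obtain xs where xs: "x = lprod m xs" "length xs = p + q" "set xs \<subseteq> S"
    using assms(1) unfolding spow_def by blast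
  let ?u = "take p xs" and ?v = "drop p xs"
  have "?u \<noteq> []" "?v \<noteq> []" "set ?u \<subseteq> S" "set ?v \<subseteq> S"
    using xs assms(2,3) by (auto dest: in_set_takeD in_set_dropD)
  then have "x = m (lprod m ?u) (lprod m ?v)"
    using xs(1) lprod_append by (metis append_take_drop_id)
  moreover have "lprod m ?u \<in> spow S m p" "lprod m ?v \<in> spow S m q"
    unfolding spow_def using xs \<open>set ?u \<subseteq> S\<close> \<open>set ?v \<subseteq> S\<close> by auto
  ultimately show thesis using that by blast
qed

lemma spow_Suc_prod_upto:
  assumes "x \<in> spow S m (Suc n)"
  obtains s where "\<And>i. i \<le> n \<Longrightarrow> s i \<in> S" "x = prod_upto m s n"
  using assms
proof (induction n arbitrary: x thesis)
  case 0
  then have "x \<in> S" using spow_one[of S m] by simp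
  with 0 show ?case by auto
next
  case (Suc n)
  obtain u v where uv: "u \<in> spow S m (Suc n)" "v \<in> spow S m 1" "x = m u v"
    using spow_add[of x "Suc n" 1] Suc.prems(2) by auto
  then have "v \<in> S" by simp
  obtain s where s: "\<And>i. i \<le> n \<Longrightarrow> s i \<in> S" "u = prod_upto m s n" using Suc.IH[OF _ uv(1)] by blast
  define s' where "s' = s(Suc n := v)"
  have "prod_upto m s' n = u" unfolding s'_def s(2) by (rule prod_upto_cong) simp
  moreover have "s' (Suc n) = v" by (simp add: s'_def)
  ultimately have "x = prod_upto m s' (Suc n)" using uv(3) by simp
  moreover have "s' i \<in> S" if "i \<le> Suc n" for i
    using that s(1) \<open>v \<in> S\<close> by (auto simp: s'_def le_Suc_eq)
  ultimately show ?case by (rule Suc.prems(1)[rotated])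
qed

text \<open>If some factor \<open>s\<^sub>j\<close> is replaced by \<open>w\<^sub>j\<close>, the product absorbs \<open>s\<^sub>j\<^sub>+\<^sub>1 \<cdots> s\<^sub>n\<close> into
  \<open>w\<^sub>j s\<^sub>j\<^sub>+\<^sub>1 \<cdots> s\<^sub>n = w\<^sub>n\<close>.\<close>

lemma prod_upto_replaced_left_multiple:
  assumes s: "\<And>i. i \<le> n \<Longrightarrow> s i \<in> S" and w: "\<And>i. i \<le> n \<Longrightarrow> w i \<in> S"
    and w_Suc: "\<And>i. i < n \<Longrightarrow> w (Suc i) = m (w i) (s (Suc i))"
    and "\<exists>j\<le>n. \<not> y ! j"
  shows "prod_upto m (\<lambda>i. if y ! i then s i else w i) n = w n \<or>
    (\<exists>q\<in>S. prod_upto m (\<lambda>i. if y ! i then s i else w i) n = m q (w n))"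
  using assms
proof (induction n)
  case (Suc n)
  let ?Q = "prod_upto m (\<lambda>i. if y ! i then s i else w i)"
  have Q_closed: "?Q n \<in> S"
    using Suc.prems(1,2) by (intro prod_upto_closed) simp
  show ?case
  proof (cases "y ! Suc n")
    case False
    then show ?thesis using Q_closed by auto
  next
    case True
    with Suc.prems(4) have "\<exists>j\<le>n. \<not> y ! j" by (metis le_Suc_eq)
    with Suc have "?Q n = w n \<or> (\<exists>q\<in>S. ?Q n = m q (w n))" by simp
    then show ?thesis using True Suc.prems by auto
  qed
qed simp

lemma prod_upto_replaced_absorbs:
  assumes s: "\<And>i. i \<le> n \<Longrightarrow> s i \<in> S" and w: "\<And>i. i \<le> n \<Longrightarrow> w i \<in> S"
    and w_Suc: "\<And>i. i < n \<Longrightarrow> w (Suc i) = m (w i) (s (Suc i))"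
    and "\<exists>j\<le>n. \<not> y ! j" and "g \<in> S" "m (w n) g = w n" "z \<in> S"
  shows "m (prod_upto m (\<lambda>i. if y ! i then s i else w i) n) (m g z) =
    m (prod_upto m (\<lambda>i. if y ! i then s i else w i) n) z"
proof -
  have "w n \<in> S" using w by simp
  then have "m (w n) (m g z) = m (w n) z" using assms(5-7) by (simp flip: assoc)
  moreover have "prod_upto m (\<lambda>i. if y ! i then s i else w i) n = w n \<or>
    (\<exists>q\<in>S. prod_upto m (\<lambda>i. if y ! i then s i else w i) n = m q (w n))"
    using s w w_Suc assms(4) by (rule prod_upto_replaced_left_multiple)
  ultimately show ?thesis using \<open>w n \<in> S\<close> assms(5,7) by auto
qed

end

section \<open>Congruences and higher commutators\<close>

lemma congruence_subset: "is_congruence S m \<theta> \<Longrightarrow> \<theta> \<subseteq> S \<times> S"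
  unfolding is_congruence_def equiv_def refl_on_def by blast

lemma congruence_refl: "is_congruence S m \<theta> \<Longrightarrow> a \<in> S \<Longrightarrow> (a, a) \<in> \<theta>"
  unfolding is_congruence_def equiv_def refl_on_def by blast

lemma congruence_sym: "is_congruence S m \<theta> \<Longrightarrow> (a, b) \<in> \<theta> \<Longrightarrow> (b, a) \<in> \<theta>"
  unfolding is_congruence_def equiv_def by (blast dest: symD)

lemma congruence_trans: "is_congruence S m \<theta> \<Longrightarrow> (a, b) \<in> \<theta> \<Longrightarrow> (b, c) \<in> \<theta> \<Longrightarrow> (a, c) \<in> \<theta>"
  unfolding is_congruence_def equiv_def by (blast dest: transD)

lemma congruence_mult:
  "is_congruence S m \<theta> \<Longrightarrow> (a, b) \<in> \<theta> \<Longrightarrow> (c, d) \<in> \<theta> \<Longrightarrow> (m a c, m b d) \<in> \<theta>"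
  unfolding is_congruence_def by blast

lemma congruence_Inter:
  assumes "\<Theta> \<noteq> {}" and cong: "\<And>\<theta>. \<theta> \<in> \<Theta> \<Longrightarrow> is_congruence S m \<theta>"
  shows "is_congruence S m (\<Inter>\<Theta>)"
  unfolding is_congruence_def
proof (intro conjI allI impI equivI refl_onI symI transI)
  show "\<Inter>\<Theta> \<subseteq> S \<times> S" using assms congruence_subset by blast
  show "(a, a) \<in> \<Inter>\<Theta>" if "a \<in> S" for a using that cong by (blast intro: congruence_refl)
  show "(b, a) \<in> \<Inter>\<Theta>" if "(a, b) \<in> \<Inter>\<Theta>" for a b using that cong by (blast intro: congruence_sym)
  show "(a, c) \<in> \<Inter>\<Theta>" if "(a, b) \<in> \<Inter>\<Theta>" "(b, c) \<in> \<Inter>\<Theta>" for a b c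
    using that cong by (blast intro: congruence_trans)
  show "(m a c, m b d) \<in> \<Inter>\<Theta>" if "(a, b) \<in> \<Inter>\<Theta>" "(c, d) \<in> \<Inter>\<Theta>" for a b c d
    using that cong by (blast intro: congruence_mult)
qed

text \<open>The carrier argument of \<^const>\<open>M_alg\<close> does not occur in its rules, so it may change freely.\<close>

lemma M_alg_mono:
  assumes "f \<in> M_alg T m \<beta>s" "list_all2 (\<subseteq>) \<beta>s \<alpha>s"
  shows "f \<in> M_alg S m \<alpha>s"
  using assms(1)
proof (induction rule: M_alg.induct)
  case (gen i a b)
  with assms(2) show ?case by (intro M_alg.gen) (auto simp: list_all2_conv_all_nth)
qed (rule M_alg.prod)

lemma M_alg_prod_upto:
  assumes "\<And>i. i \<le> n \<Longrightarrow> i < length \<alpha>s \<and> (t i, s i) \<in> \<alpha>s ! i"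
  shows "(\<lambda>y. prod_upto m (\<lambda>i. if y ! i then s i else t i) n) \<in> M_alg S m \<alpha>s"
  using assms by (induction n) (auto intro!: M_alg.gen M_alg.prod)

lemma nth_False_if_ne_replicate_True:
  assumes "length y = n" "y \<noteq> replicate n True"
  obtains j where "j < n" "\<not> y ! j"
proof -
  from assms have "\<not> (\<forall>x\<in>set y. x = True)" using replicate_length_same by fastforce
  with assms(1) that show thesis by (auto simp: in_set_conv_nth)
qed

context magma_on
begin

lemma total_congruence: "is_congruence S m (S \<times> S)"
  unfolding is_congruence_def by (auto intro: equivI refl_onI symI transI)

lemma M_alg_values:
  assumes "f \<in> M_alg T m \<alpha>s" "\<forall>\<alpha>\<in>set \<alpha>s. \<alpha> \<subseteq> S \<times> S"
  shows "f x \<in> S"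
  using assms(1)
proof (induction rule: M_alg.induct)
  case (gen i a b)
  with assms(2) show ?case by (auto dest!: nth_mem)
qed simp

lemma hcomm_congruence:
  assumes "\<forall>\<alpha>\<in>set \<alpha>s. \<alpha> \<subseteq> S \<times> S"
  shows "is_congruence S m (hcomm S m \<alpha>s)"
proof -
  have "term_cond S m \<alpha>s (S \<times> S)"
    unfolding term_cond_def using M_alg_values[OF _ assms] by blast
  then show ?thesis
    unfolding hcomm_def using total_congruence by (intro congruence_Inter) auto
qed

lemma hcomm_by_term_condition:
  assumes F: "F \<in> M_alg S m \<alpha>s" and \<alpha>s: "length \<alpha>s = Suc n" "\<forall>\<alpha>\<in>set \<alpha>s. \<alpha> \<subseteq> S \<times> S"
    and edges: "\<And>y. length y = n \<Longrightarrow> y \<noteq> replicate n True \<Longrightarrow> F (y @ [False]) = F (y @ [True])"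
  shows "(F (replicate n True @ [False]), F (replicate n True @ [True])) \<in> hcomm S m \<alpha>s"
  unfolding hcomm_def
proof (intro InterI, clarify)
  fix \<delta> assume \<delta>: "is_congruence S m \<delta>" and tc: "term_cond S m \<alpha>s \<delta>"
  have "(F (y @ [False]), F (y @ [True])) \<in> \<delta>" if "length y = n" "y \<noteq> replicate n True" for y
    using edges[OF that] congruence_refl[OF \<delta> M_alg_values[OF F \<alpha>s(2)]] by simp
  with tc F \<alpha>s(1) show "(F (replicate n True @ [False]), F (replicate n True @ [True])) \<in> \<delta>"
    unfolding term_cond_def by simp
qed

lemma hcomm_binary_term_condition:
  assumes "(a, u) \<in> \<alpha>" "(v, w) \<in> \<beta>" "\<alpha> \<subseteq> S \<times> S" "\<beta> \<subseteq> S \<times> S" and "m a v = m a w"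
  shows "(m u v, m u w) \<in> hcomm S m [\<alpha>, \<beta>]"
proof -
  define F where "F x = m (if x ! 0 then u else a) (if x ! 1 then w else v)" for x :: "bool list"
  have "F \<in> M_alg S m [\<alpha>, \<beta>]"
    unfolding F_def using assms(1,2) by (intro M_alg.prod M_alg.gen) auto
  moreover have "F (y @ [False]) = F (y @ [True])" if "length y = 1" "y \<noteq> [True]" for y
    using that assms(5) unfolding F_def by (cases y) auto
  ultimately have "(F [True, False], F [True, True]) \<in> hcomm S m [\<alpha>, \<beta>]"
    using hcomm_by_term_condition[of F "[\<alpha>, \<beta>]" 1] assms(3,4) by simp
  then show ?thesis unfolding F_def by simp
qed

lemma derived_c_congruence: "is_congruence S m (derived_c S m k)"
  by (induction k) (simp_all add: total_congruence hcomm_congruence congruence_subset)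

lemma lcs_congruence: "is_congruence S m (lcs S m k)"
  by (induction k) (simp_all add: total_congruence hcomm_congruence congruence_subset)

lemma rcs_congruence: "is_congruence S m (rcs S m k)"
  by (induction k) (simp_all add: total_congruence hcomm_congruence congruence_subset)

end

section \<open>Powers of a semigroup with a completely simple ideal\<close>

locale semigroup_with_cs_ideal = semigroup_on +
  fixes K :: "'a set"
  assumes ideal: "is_ideal S m K" and completely_simple: "completely_simple K m"
begin

lemma K_subset: "K \<subseteq> S" and K_nonempty: "K \<noteq> {}"
  using ideal unfolding is_ideal_def by blast+

lemma ideal_closed: "s \<in> S \<Longrightarrow> k \<in> K \<Longrightarrow> m s k \<in> K" "s \<in> S \<Longrightarrow> k \<in> K \<Longrightarrow> m k s \<in> K"
  using ideal unfolding is_ideal_def by blast+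

lemma K_subset_spow:
  assumes "0 < n"
  shows "K \<subseteq> spow S m n"
proof
  fix k assume "k \<in> K"
  then obtain f where "f \<in> K" "m f k = k" using completely_simple_bridge[OF completely_simple] by metis
  then have "k = lprod m (replicate (n - 1) f @ [k])" by (simp add: lprod_replicate_left_unit)
  with assms \<open>f \<in> K\<close> \<open>k \<in> K\<close> K_subset show "k \<in> spow S m n"
    unfolding spow_def by force
qed

lemma spow_eq_K_if_Image_Id:
  assumes "0 < n" "spow S m n \<subseteq> \<theta> `` K" "\<theta> = Id_on S"
  shows "spow S m n = K"
  using assms K_subset K_subset_spow by auto

lemma total_Image_K: "(S \<times> S) `` K = S"
  using K_subset K_nonempty by auto

text \<open>With \<open>a f = a\<close> and \<open>f b = b\<close>, the pair \<open>(v, f v)\<close> lies in \<open>\<theta>\<^sub>1\<close> and \<open>a v = a (f v)\<close>, so the term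
  condition moves \<open>u v\<close> to \<open>u f v \<in> K\<close>.\<close>

lemma hcomm2_Image_mult:
  assumes \<theta>: "is_congruence S m \<theta>\<^sub>0" "is_congruence S m \<theta>\<^sub>1"
    and uv: "u \<in> \<theta>\<^sub>0 `` K" "v \<in> \<theta>\<^sub>1 `` K"
  shows "m u v \<in> hcomm S m [\<theta>\<^sub>0, \<theta>\<^sub>1] `` K"
proof -
  obtain a b where ab: "a \<in> K" "b \<in> K" "(a, u) \<in> \<theta>\<^sub>0" "(b, v) \<in> \<theta>\<^sub>1" using uv by blast
  obtain f where f: "f \<in> K" "m a f = a" "m f b = b"
    using completely_simple_bridge[OF completely_simple ab(1,2)] by metis
  have S: "a \<in> S" "f \<in> S" "u \<in> S" "v \<in> S"
    using ab f K_subset congruence_subset[OF \<theta>(1)] congruence_subset[OF \<theta>(2)] by auto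
  have "(m f b, m f v) \<in> \<theta>\<^sub>1"
    using congruence_mult[OF \<theta>(2) congruence_refl[OF \<theta>(2) \<open>f \<in> S\<close>] ab(4)] .
  then have "(v, m f v) \<in> \<theta>\<^sub>1"
    using f(3) congruence_trans[OF \<theta>(2) congruence_sym[OF \<theta>(2) ab(4)]] by simp
  moreover have "m a v = m a (m f v)" using f(2) S by (simp flip: assoc)
  ultimately have "(m u v, m u (m f v)) \<in> hcomm S m [\<theta>\<^sub>0, \<theta>\<^sub>1]"
    using hcomm_binary_term_condition[OF ab(3)] congruence_subset[OF \<theta>(1)] congruence_subset[OF \<theta>(2)]
    by simp
  moreover have "is_congruence S m (hcomm S m [\<theta>\<^sub>0, \<theta>\<^sub>1])"
    using \<theta> by (simp add: hcomm_congruence congruence_subset)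
  ultimately have "(m u (m f v), m u v) \<in> hcomm S m [\<theta>\<^sub>0, \<theta>\<^sub>1]"
    by (rule congruence_sym[rotated])
  moreover have "m u (m f v) \<in> K" using ideal_closed f S by simp
  ultimately show ?thesis by blast
qed

lemma spow_subset_derived_c_Image: "spow S m (2 ^ k) \<subseteq> derived_c S m k `` K"
proof (induction k)
  case (Suc k)
  show ?case
  proof
    fix x assume "x \<in> spow S m (2 ^ Suc k)"
    then obtain u v where "u \<in> spow S m (2 ^ k)" "v \<in> spow S m (2 ^ k)" "x = m u v"
      using spow_add[of x "2 ^ k" "2 ^ k"] by (auto simp: mult_2)
    with Suc.IH show "x \<in> derived_c S m (Suc k) `` K"
      by (auto intro: hcomm2_Image_mult derived_c_congruence)
  qed
qed (simp add: total_Image_K)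

lemma spow_subset_lcs_Image: "spow S m (Suc k) \<subseteq> lcs S m k `` K"
proof (induction k)
  case (Suc k)
  show ?case
  proof
    fix x assume "x \<in> spow S m (Suc (Suc k))"
    then obtain u v where "u \<in> spow S m 1" "v \<in> spow S m (Suc k)" "x = m u v"
      using spow_add[of x 1 "Suc k"] by auto
    with Suc.IH show "x \<in> lcs S m (Suc k) `` K"
      by (auto intro: hcomm2_Image_mult total_congruence lcs_congruence simp: total_Image_K)
  qed
qed (simp add: total_Image_K)

lemma spow_subset_rcs_Image: "spow S m (Suc k) \<subseteq> rcs S m k `` K"
proof (induction k)
  case (Suc k)
  show ?case
  proof
    fix x assume "x \<in> spow S m (Suc (Suc k))"
    then obtain u v where "u \<in> spow S m (Suc k)" "v \<in> spow S m 1" "x = m u v"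
      using spow_add[of x "Suc k" 1] by auto
    with Suc.IH show "x \<in> rcs S m (Suc k) `` K"
      by (auto intro: hcomm2_Image_mult total_congruence rcs_congruence simp: total_Image_K)
  qed
qed (simp add: total_Image_K)

lemma prod_upto_last_in_ideal:
  "(\<And>i. i \<le> n \<Longrightarrow> h i \<in> S) \<Longrightarrow> h n \<in> K \<Longrightarrow> prod_upto m h n \<in> K"
  by (cases n) (simp_all add: ideal_closed prod_upto_closed)

text \<open>For \<open>x = s\<^sub>0 \<cdots> s\<^sub>d\<close> and \<open>a \<in> K\<close>, put \<open>w\<^sub>i = a s\<^sub>0 \<cdots> s\<^sub>i\<close> and pick \<open>g \<in> K\<close> with
  \<open>w\<^sub>d\<^sub>-\<^sub>1 g = w\<^sub>d\<^sub>-\<^sub>1\<close>. The cube function \<open>F\<close> picks \<open>s\<^sub>i\<close> or \<open>w\<^sub>i\<close> in direction \<open>i < d\<close>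
  and \<open>s\<^sub>d\<close> or \<open>g s\<^sub>d\<close> in the last one; its last edges agree except on the top one, which joins
  \<open>x\<close> to an element of \<open>K\<close>.\<close>

lemma spow_subset_supernilpotent_Image: "spow S m (Suc d) \<subseteq> hcomm S m (replicate (Suc d) (S \<times> S)) `` K"
proof
  fix x assume "x \<in> spow S m (Suc d)"
  then obtain s where s: "\<And>i. i \<le> d \<Longrightarrow> s i \<in> S" "x = prod_upto m s d"
    by (metis spow_Suc_prod_upto)
  obtain a where "a \<in> K" using K_nonempty by blast
  define w where "w i = m a (prod_upto m s i)" for i
  have w: "w i \<in> K" if "i \<le> d" for i
    unfolding w_def using that s(1) \<open>a \<in> K\<close> by (simp add: ideal_closed prod_upto_closed)
  obtain g where g: "g \<in> K" "m (w (d - 1)) g = w (d - 1)"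
    using completely_simple_bridge[OF completely_simple w w] by (metis diff_le_self)
  define t where "t i = (if i < d then w i else m g (s d))" for i
  define F where "F y = prod_upto m (\<lambda>i. if y ! i then s i else t i) d" for y
  have t: "t i \<in> K" if "i \<le> d" for i
    unfolding t_def using that w g s(1) by (simp add: ideal_closed)
  have "F \<in> M_alg S m (replicate (Suc d) (S \<times> S))"
    unfolding F_def by (rule M_alg_prod_upto) (use s(1) t K_subset in \<open>auto simp del: replicate_Suc\<close>)
  moreover have "F (y @ [False]) = F (y @ [True])" if y: "length y = d" "y \<noteq> replicate d True" for y
  proof -
    obtain j where j: "j < d" "\<not> y ! j"
      using y by (rule nth_False_if_ne_replicate_True)
    then obtain d' where d': "d = Suc d'" by (cases d) auto
    let ?Q = "prod_upto m (\<lambda>i. if y ! i then s i else w i) d'"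
    have "prod_upto m (\<lambda>i. if (y @ [b]) ! i then s i else t i) d' = ?Q" for b
      by (rule prod_upto_cong) (use y d' in \<open>auto simp: t_def nth_append\<close>)
    then have "F (y @ [b]) = m ?Q (if b then s d else m g (s d))" for b
      unfolding F_def d' using y(1) d' by (simp add: t_def nth_append)
    moreover have "m ?Q (m g (s d)) = m ?Q (s d)"
    proof (rule prod_upto_replaced_absorbs)
      show "w (Suc i) = m (w i) (s (Suc i))" if "i < d'" for i
        unfolding w_def using that s(1) \<open>a \<in> K\<close> K_subset d' by (auto simp: prod_upto_closed)
    qed (use s(1) w K_subset j g d' in \<open>auto simp: less_Suc_eq_le\<close>)
    ultimately show ?thesis by simp
  qed
  ultimately have "(F (replicate d True @ [False]), F (replicate d True @ [True]))
      \<in> hcomm S m (replicate (Suc d) (S \<times> S))"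
    by (intro hcomm_by_term_condition) auto
  moreover have "F (replicate d True @ [True]) = x"
    unfolding F_def s(2) by (rule prod_upto_cong) (simp add: nth_append)
  moreover have "F (replicate d True @ [False]) \<in> K"
    unfolding F_def using s(1) t K_subset
    by (intro prod_upto_last_in_ideal) (auto simp: nth_append)
  ultimately show "x \<in> hcomm S m (replicate (Suc d) (S \<times> S)) `` K" by blast
qed

end

section \<open>Higher commutators in groups\<close>

lemma (in group) magma_on_carrier: "magma_on (carrier G) (\<otimes>)"
  by unfold_locales simp

lemma (in group) M_alg_inv:
  assumes "F \<in> M_alg T (\<otimes>) (replicate n (carrier G \<times> carrier G))"
  shows "(\<lambda>x. inv (F x)) \<in> M_alg T (\<otimes>) (replicate n (carrier G \<times> carrier G))"
  using assms
proof (induction rule: M_alg.induct)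
  case (gen i a b)
  then have "(\<lambda>x. if x ! i then inv b else inv a) \<in> M_alg T (\<otimes>) (replicate n (carrier G \<times> carrier G))"
    by (intro M_alg.gen) auto
  then show ?case by (simp add: if_distrib)
next
  case (prod f g)
  have "f x \<in> carrier G" "g x \<in> carrier G" for x
    using prod.hyps(1,2) by (auto intro: magma_on.M_alg_values[OF magma_on_carrier])
  then have "(\<lambda>x. inv (f x \<otimes> g x)) = (\<lambda>x. inv (g x) \<otimes> inv (f x))"
    by (simp add: inv_mult_group)
  with M_alg.prod[OF prod.IH(2,1)] show ?case by simp
qed

definition (in group) cube_face_elements :: "nat \<Rightarrow> nat \<Rightarrow> 'a set" where
  "cube_face_elements d k = {g \<in> carrier G.
     \<exists>F \<in> M_alg (carrier G) (\<otimes>) (replicate (Suc d) (carrier G \<times> carrier G)).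
       \<forall>x. F x = (if \<forall>i\<le>k. x ! i then g else \<one>)}"

lemma (in group) cube_face_elementsI:
  assumes "g \<in> carrier G" "F \<in> M_alg (carrier G) (\<otimes>) (replicate (Suc d) (carrier G \<times> carrier G))"
    and "\<And>x. F x = (if \<forall>i\<le>k. x ! i then g else \<one>)"
  shows "g \<in> cube_face_elements d k"
  using assms unfolding cube_face_elements_def by blast

lemma (in group) cube_face_elements_subgroup: "subgroup (cube_face_elements d k) G"
proof (rule subgroupI)
  show "cube_face_elements d k \<subseteq> carrier G" unfolding cube_face_elements_def by blast
  have "(\<lambda>x. if x ! 0 then \<one> else \<one>) \<in> M_alg (carrier G) (\<otimes>) (replicate (Suc d) (carrier G \<times> carrier G))"
    by (rule M_alg.gen) auto
  then have "\<one> \<in> cube_face_elements d k" by (rule cube_face_elementsI[OF one_closed]) simp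
  then show "cube_face_elements d k \<noteq> {}" by blast
next
  fix g assume "g \<in> cube_face_elements d k"
  then obtain F where F: "g \<in> carrier G"
    "F \<in> M_alg (carrier G) (\<otimes>) (replicate (Suc d) (carrier G \<times> carrier G))"
    "\<forall>x. F x = (if \<forall>i\<le>k. x ! i then g else \<one>)"
    unfolding cube_face_elements_def by blast
  show "inv g \<in> cube_face_elements d k"
    by (rule cube_face_elementsI[OF _ M_alg_inv[OF F(2)]]) (use F in auto)
next
  fix g h assume "g \<in> cube_face_elements d k" "h \<in> cube_face_elements d k"
  then obtain F H where FH: "g \<in> carrier G" "h \<in> carrier G"
    "F \<in> M_alg (carrier G) (\<otimes>) (replicate (Suc d) (carrier G \<times> carrier G))"
    "H \<in> M_alg (carrier G) (\<otimes>) (replicate (Suc d) (carrier G \<times> carrier G))"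
    "\<forall>x. F x = (if \<forall>i\<le>k. x ! i then g else \<one>)" "\<forall>x. H x = (if \<forall>i\<le>k. x ! i then h else \<one>)"
    unfolding cube_face_elements_def by blast
  show "g \<otimes> h \<in> cube_face_elements d k"
    by (rule cube_face_elementsI[OF _ M_alg.prod[OF FH(3,4)]]) (use FH in auto)
qed

text \<open>If \<open>F\<close> realises \<open>p\<close> on the face \<open>x\<^sub>0 = \<dots> = x\<^sub>k = 1\<close>, then \<open>F V F\<inverse> V'\<close> realises the
  commutator of \<open>p\<close> and \<open>q\<close> on the face \<open>x\<^sub>0 = \<dots> = x\<^sub>k\<^sub>+\<^sub>1 = 1\<close>.\<close>

lemma (in group) gamma_subset_cube_face_elements: "k \<le> d \<Longrightarrow> gamma G k \<subseteq> cube_face_elements d k"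
proof (induction k)
  let ?M = "M_alg (carrier G) (\<otimes>) (replicate (Suc d) (carrier G \<times> carrier G))"
  case 0
  show ?case
  proof
    fix g assume "g \<in> gamma G 0"
    then have "g \<in> carrier G" by simp
    moreover from this have "(\<lambda>x. if x ! 0 then g else \<one>) \<in> ?M" by (intro M_alg.gen) auto
    ultimately show "g \<in> cube_face_elements d 0" by (intro cube_face_elementsI) auto
  qed
next
  let ?M = "M_alg (carrier G) (\<otimes>) (replicate (Suc d) (carrier G \<times> carrier G))"
  case (Suc k)
  have "p \<otimes> q \<otimes> inv p \<otimes> inv q \<in> cube_face_elements d (Suc k)"
    if p: "p \<in> gamma G k" and q: "q \<in> carrier G" for p q
  proof -
    from p Suc obtain F where F: "p \<in> carrier G" "F \<in> ?M" "\<forall>x. F x = (if \<forall>i\<le>k. x ! i then p else \<one>)"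
      unfolding cube_face_elements_def by auto
    define V V' where "V x = (if x ! Suc k then q else \<one>)" and "V' x = (if x ! Suc k then inv q else \<one>)"
      for x :: "bool list"
    have "V \<in> ?M" "V' \<in> ?M" unfolding V_def V'_def using Suc.prems q by (auto intro!: M_alg.gen)
    with F(2) have "(\<lambda>x. F x \<otimes> V x \<otimes> inv (F x) \<otimes> V' x) \<in> ?M" by (intro M_alg.prod M_alg_inv)
    moreover have "F x \<otimes> V x \<otimes> inv (F x) \<otimes> V' x = (if \<forall>i\<le>Suc k. x ! i then p \<otimes> q \<otimes> inv p \<otimes> inv q else \<one>)"
      for x
      using F(1,3) q unfolding V_def V'_def by (auto simp: le_Suc_eq m_assoc)
    ultimately show ?thesis using F(1) q by (intro cube_face_elementsI) auto
  qed
  then show ?case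
    unfolding gamma.simps by (intro generate_subgroup_incl cube_face_elements_subgroup) blast
qed

lemma (in group) one_in_gamma: "\<one> \<in> gamma G k"
  by (cases k) (auto intro: generate.one)

locale group_in_magma = group G + magma_on S "mult G"
  for G :: "('a, 'b) monoid_scheme" (structure) and S +
  assumes carrier_subset: "carrier G \<subseteq> S"
begin

lemma one_class_subgroup:
  assumes \<theta>: "is_congruence S (\<otimes>) \<theta>"
  shows "subgroup {g \<in> carrier G. (g, \<one>) \<in> \<theta>} G"
proof (rule subgroupI)
  show "{g \<in> carrier G. (g, \<one>) \<in> \<theta>} \<noteq> {}"
    using congruence_refl[OF \<theta>] carrier_subset by blast
next
  fix g assume g: "g \<in> {g \<in> carrier G. (g, \<one>) \<in> \<theta>}"
  then have "(inv g \<otimes> g, inv g \<otimes> \<one>) \<in> \<theta>"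
    using congruence_mult[OF \<theta> congruence_refl[OF \<theta>]] carrier_subset by blast
  then show "inv g \<in> {g \<in> carrier G. (g, \<one>) \<in> \<theta>}"
    using g congruence_sym[OF \<theta>] by auto
next
  fix g h assume "g \<in> {g \<in> carrier G. (g, \<one>) \<in> \<theta>}" "h \<in> {g \<in> carrier G. (g, \<one>) \<in> \<theta>}"
  then show "g \<otimes> h \<in> {g \<in> carrier G. (g, \<one>) \<in> \<theta>}"
    using congruence_mult[OF \<theta>, of g \<one> h \<one>] by auto
qed blast

lemma commutator_in_hcomm2:
  assumes \<theta>: "is_congruence S (\<otimes>) \<theta>\<^sub>0" "is_congruence S (\<otimes>) \<theta>\<^sub>1"
    and pq: "p \<in> carrier G" "q \<in> carrier G" "(p, \<one>) \<in> \<theta>\<^sub>0" "(q, \<one>) \<in> \<theta>\<^sub>1"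
  shows "(p \<otimes> q \<otimes> inv p \<otimes> inv q, \<one>) \<in> hcomm S (\<otimes>) [\<theta>\<^sub>0, \<theta>\<^sub>1]"
proof -
  define F where "F x = (if x ! 0 then p else \<one>) \<otimes> (if x ! 1 then q else \<one>) \<otimes>
      (if x ! 0 then inv p else \<one>) \<otimes> (if x ! 1 then inv q else \<one>)" for x :: "bool list"
  have "(inv p, \<one>) \<in> \<theta>\<^sub>0" "(inv q, \<one>) \<in> \<theta>\<^sub>1"
    using subgroup.m_inv_closed[OF one_class_subgroup[OF \<theta>(1)], of p]
      subgroup.m_inv_closed[OF one_class_subgroup[OF \<theta>(2)], of q] pq by auto
  then have "F \<in> M_alg S (\<otimes>) [\<theta>\<^sub>0, \<theta>\<^sub>1]"
    unfolding F_def using pq congruence_sym[OF \<theta>(1)] congruence_sym[OF \<theta>(2)]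
    by (intro M_alg.prod M_alg.gen) auto
  moreover have "F (y @ [False]) = F (y @ [True])" if "length y = 1" "y \<noteq> replicate 1 True" for y
    using that pq unfolding F_def by (cases y) auto
  ultimately have "(F [True, False], F [True, True]) \<in> hcomm S (\<otimes>) [\<theta>\<^sub>0, \<theta>\<^sub>1]"
    using hcomm_by_term_condition[of F "[\<theta>\<^sub>0, \<theta>\<^sub>1]" 1] congruence_subset[OF \<theta>(1)]
      congruence_subset[OF \<theta>(2)] by simp
  moreover have "is_congruence S (\<otimes>) (hcomm S (\<otimes>) [\<theta>\<^sub>0, \<theta>\<^sub>1])"
    using \<theta> by (simp add: hcomm_congruence congruence_subset)
  ultimately show ?thesis using pq unfolding F_def by (auto dest: congruence_sym)
qed


lemma derived_subset_one_class:
  "(derived G ^^ k) (carrier G) \<subseteq> {g \<in> carrier G. (g, \<one>) \<in> derived_c S (\<otimes>) k}"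
proof (induction k)
  case 0
  show ?case using carrier_subset by auto
next
  case (Suc k)
  have "derived_set G ((derived G ^^ k) (carrier G)) \<subseteq> {g \<in> carrier G. (g, \<one>) \<in> derived_c S (\<otimes>) (Suc k)}"
    using Suc.IH by (auto intro!: commutator_in_hcomm2 derived_c_congruence)
  then show ?case
    unfolding funpow.simps comp_def derived_def
    by (intro generate_subgroup_incl one_class_subgroup derived_c_congruence)
qed

lemma gamma_subset_lcs_one_class: "gamma G k \<subseteq> {g \<in> carrier G. (g, \<one>) \<in> lcs S (\<otimes>) k}"
proof (induction k)
  case 0
  show ?case using carrier_subset by auto
next
  case (Suc k)
  have "x \<otimes> y \<otimes> inv x \<otimes> inv y \<in> {g \<in> carrier G. (g, \<one>) \<in> lcs S (\<otimes>) (Suc k)}"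
    if x: "x \<in> gamma G k" and y: "y \<in> carrier G" for x y
  proof -
    have "x \<in> carrier G" "(x, \<one>) \<in> lcs S (\<otimes>) k" using x Suc.IH by auto
    with y carrier_subset have "y \<otimes> x \<otimes> inv y \<otimes> inv x \<in> {g \<in> carrier G. (g, \<one>) \<in> lcs S (\<otimes>) (Suc k)}"
      by (auto intro!: commutator_in_hcomm2 total_congruence lcs_congruence)
    from subgroup.m_inv_closed[OF one_class_subgroup[OF lcs_congruence] this]
    show ?thesis using y \<open>x \<in> carrier G\<close> by (simp add: inv_mult_group m_assoc)
  qed
  then show ?case
    unfolding gamma.simps by (intro generate_subgroup_incl one_class_subgroup lcs_congruence) blast
qed

lemma gamma_subset_rcs_one_class: "gamma G k \<subseteq> {g \<in> carrier G. (g, \<one>) \<in> rcs S (\<otimes>) k}"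
proof (induction k)
  case 0
  show ?case using carrier_subset by auto
next
  case (Suc k)
  have "{x \<otimes> y \<otimes> inv x \<otimes> inv y | x y. x \<in> gamma G k \<and> y \<in> carrier G}
      \<subseteq> {g \<in> carrier G. (g, \<one>) \<in> rcs S (\<otimes>) (Suc k)}"
    using Suc.IH carrier_subset by (auto intro!: commutator_in_hcomm2 total_congruence rcs_congruence)
  then show ?case
    unfolding gamma.simps by (intro generate_subgroup_incl one_class_subgroup rcs_congruence)
qed

lemma gamma_subset_supernilpotent_one_class:
  "gamma G d \<subseteq> {g \<in> carrier G. (g, \<one>) \<in> hcomm S (\<otimes>) (replicate (Suc d) (S \<times> S))}"
proof
  fix g assume "g \<in> gamma G d"
  then have "g \<in> cube_face_elements d d" using gamma_subset_cube_face_elements[of d d] by blast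
  then obtain F where g: "g \<in> carrier G" and
    F: "F \<in> M_alg (carrier G) (\<otimes>) (replicate (Suc d) (carrier G \<times> carrier G))"
      "\<And>x. F x = (if \<forall>i\<le>d. x ! i then g else \<one>)"
    unfolding cube_face_elements_def by blast
  have "F \<in> M_alg S (\<otimes>) (replicate (Suc d) (S \<times> S))"
    by (rule M_alg_mono[OF F(1)])
      (use carrier_subset in \<open>auto simp: list_all2_conv_all_nth simp del: replicate_Suc\<close>)
  moreover have "F (y @ [False]) = F (y @ [True])" if y: "length y = d" "y \<noteq> replicate d True" for y
  proof -
    obtain j where j: "j < d" "\<not> y ! j" using y by (rule nth_False_if_ne_replicate_True)
    have no_top: "\<not> (\<forall>i\<le>d. (y @ [b]) ! i)" for b
    proof
      assume "\<forall>i\<le>d. (y @ [b]) ! i"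
      then have "(y @ [b]) ! j" using j(1) by simp
      with j y(1) show False by (simp add: nth_append)
    qed
    have "F (y @ [b]) = \<one>" for b unfolding F(2) using no_top[of b] by (rule if_not_P)
    then show ?thesis by simp
  qed
  ultimately have "(F (replicate d True @ [False]), F (replicate d True @ [True]))
      \<in> hcomm S (\<otimes>) (replicate (Suc d) (S \<times> S))"
    by (intro hcomm_by_term_condition) auto
  moreover have "F (replicate d True @ [False]) = \<one>"
    using F(2) by (metis le_refl length_replicate nth_append_length)
  moreover have "F (replicate d True @ [True]) = g"
  proof -
    have "(replicate d True @ [True]) ! i" if "i \<le> d" for i
      using that by (cases "i < d") (auto simp: nth_append)
    then show ?thesis unfolding F(2) by simp
  qed
  moreover have "is_congruence S (\<otimes>) (hcomm S (\<otimes>) (replicate (Suc d) (S \<times> S)))"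
    by (rule hcomm_congruence) simp
  ultimately show "g \<in> {g \<in> carrier G. (g, \<one>) \<in> hcomm S (\<otimes>) (replicate (Suc d) (S \<times> S))}"
    using g by (auto dest: congruence_sym)
qed


lemma derived_series_trivial:
  assumes "derived_c S (\<otimes>) k = Id_on S"
  shows "(derived G ^^ k) (carrier G) = {\<one>}"
  using derived_subset_one_class[of k] subgroup.one_closed[OF exp_of_derived_is_subgroup[OF subgroup_self]]
    assms by auto

lemma lower_central_series_trivial:
  assumes "lcs S (\<otimes>) k = Id_on S \<or> rcs S (\<otimes>) k = Id_on S \<or>
    hcomm S (\<otimes>) (replicate (Suc k) (S \<times> S)) = Id_on S"
  shows "gamma G k = {\<one>}"
  using gamma_subset_lcs_one_class[of k] gamma_subset_rcs_one_class[of k]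
    gamma_subset_supernilpotent_one_class[of k] one_in_gamma assms by auto

end

theorem lemma3p1:
  fixes S K :: "'a set" and m :: "'a \<Rightarrow> 'a \<Rightarrow> 'a" and d :: nat
  assumes "is_semigroup S m"
    and "is_ideal S m K"
    and "completely_simple K m"
  shows "(d_solvable S m d \<longrightarrow>
            spow S m (2 ^ d) = K \<and> (\<forall>G. sg_subgroup K m G \<longrightarrow> group_d_solvable G d))
       \<and> ((left_nilpotent S m d \<or> right_nilpotent S m d \<or> supernilpotent S m d) \<longrightarrow>
            spow S m (d + 1) = K \<and> (\<forall>G. sg_subgroup K m G \<longrightarrow> group_d_nilpotent G d))"
proof -
  interpret semigroup_with_cs_ideal S m K
    using assms unfolding is_semigroup_iff_semigroup_on
    by (simp add: semigroup_with_cs_ideal_def semigroup_with_cs_ideal_axioms_def)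
  have G: "group_in_magma G S" "mult G = m" if "sg_subgroup K m G" for G :: "'a monoid"
    using that K_subset unfolding sg_subgroup_def group_in_magma_def group_in_magma_axioms_def
    by (auto simp: magma_on_axioms)
  show ?thesis
  proof (intro conjI impI allI)
    assume "d_solvable S m d"
    then have trivial: "derived_c S m d = Id_on S" by (simp add: d_solvable_def)
    then show "spow S m (2 ^ d) = K"
      using spow_eq_K_if_Image_Id[OF _ spow_subset_derived_c_Image] by simp
    fix G assume "sg_subgroup K m G"
    with trivial show "group_d_solvable G d"
      unfolding group_d_solvable_def by (metis G group_in_magma.derived_series_trivial)
  next
    assume "left_nilpotent S m d \<or> right_nilpotent S m d \<or> supernilpotent S m d"
    then have trivial: "lcs S m d = Id_on S \<or> rcs S m d = Id_on S \<or>
        hcomm S m (replicate (Suc d) (S \<times> S)) = Id_on S"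
      by (simp add: left_nilpotent_def right_nilpotent_def supernilpotent_def)
    then show "spow S m (d + 1) = K"
      using spow_eq_K_if_Image_Id[OF _ spow_subset_lcs_Image]
        spow_eq_K_if_Image_Id[OF _ spow_subset_rcs_Image]
        spow_eq_K_if_Image_Id[OF _ spow_subset_supernilpotent_Image] by auto
    fix G assume "sg_subgroup K m G"
    with trivial show "group_d_nilpotent G d"
      unfolding group_d_nilpotent_def by (metis G group_in_magma.lower_central_series_trivial)
  qed
qed

end
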